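(* For distinct $l, l' \in H^*$ and every $n \ge 1$, the degree-$n$ parts of $\Phi_l(R(G/H,1))$ and $\Phi_{l'}(R(G/H,1))$ are orthogonal with respect to $\langle \cdot, \cdot \rangle$; i.e., the sub-bialgebras $\Phi_l(R(G/H,1))$, $l \in H^*$, are pairwise orthogonal in positive degrees.
   Context: Let $G$ be a finite abelian group (written additively) and $H \subseteq G$ a subgroup. For $n \ge 1$, $S_n[G] = S_n \ltimes G^n$ is the group of $n \times n$ monomial matrices whose nonzero entries lie in $G$. Let $s: S_n[G] \to G$ be the homomorphism sending a monomial matrix to the sum of its nonzero entries, and let $G_n(G,H) = \{g \in S_n[G] : s(g) \in H\}$. For $n \ge 1$, $R_n(G,H)$ is the Grothendieck group of finite-dimensional complex representations of $G_n(G,H)$, $R_0(G,H) = \mathbb{Z}$, and $R(G,H) = \bigoplus_{n \ge 0} R_n(G,H)$, with graded bilinear form $\langle \cdot,\cdot\rangle$ for which the irreducible classes (and $1 \in R_0$) form an orthonormal basis; similarly $R(G/H,1)$ is built from the groups $G_n(G/H,1)$ of monomial matrices with entries in $G/H$ summing to $0$. Let $\phi: G_n(G,H) \to G_n(G/H,1)$ be reduction of entries mod $H$ (surjective, kernel the diagonal subgroup $H^n$), and $\phi^*: R(G/H,1) \to R(G,H)$ the graded map induced by pullback. $H^* = \mathrm{Hom}(H, \mathbb{C}^\times)$; for $l \in H^*$, $\tau_l$ is the graded operator on $R(G,H)$ induced by tensoring with the linear character $g \mapsto l(s(g))$ of $G_n(G,H)$, and $\Phi_l = \tau_l \circ \phi^*$.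 *)

theory Defs
  imports "HOL-Algebra.Algebra" "Jordan_Normal_Form.Matrix"
begin

text \<open>Monomial matrices over a group G: the pair (p, v) stands for the n x n
matrix whose only nonzero entries are v i at position (i, p i), i < n,
where p is a permutation of the index set {..<n}.  Matrix multiplication
gives (p,v)(q,w) = (q o p, i maps to v i * w (p i)).\<close>

definition mon_carrier :: "('a,'b) monoid_scheme \<Rightarrow> nat \<Rightarrow> ((nat \<Rightarrow> nat) \<times> (nat \<Rightarrow> 'a)) set" where
  "mon_carrier G n = {(p, v). p permutes {..<n} \<and> (\<forall>i<n. v i \<in> carrier G) \<and> (\<forall>i. n \<le> i \<longrightarrow> v i = undefined)}"

definition mon_mult :: "('a,'b) monoid_scheme \<Rightarrow> nat \<Rightarrow> (nat \<Rightarrow> nat) \<times> (nat \<Rightarrow> 'a) \<Rightarrow> (nat \<Rightarrow> nat) \<times> (nat \<Rightarrow> 'a) \<Rightarrow> (nat \<Rightarrow> nat) \<times> (nat \<Rightarrow> 'a)" where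
  "mon_mult G n x y = (fst y \<circ> fst x, \<lambda>i. if i < n then snd x i \<otimes>\<^bsub>G\<^esub> snd y (fst x i) else undefined)"

definition mon_one :: "('a,'b) monoid_scheme \<Rightarrow> nat \<Rightarrow> (nat \<Rightarrow> nat) \<times> (nat \<Rightarrow> 'a)" where
  "mon_one G n = (id, \<lambda>i. if i < n then \<one>\<^bsub>G\<^esub> else undefined)"

text \<open>The map s: sum (here: product, as HOL-Algebra groups are written
multiplicatively) of the nonzero entries.\<close>
definition entry_sum :: "('a,'b) monoid_scheme \<Rightarrow> nat \<Rightarrow> (nat \<Rightarrow> nat) \<times> (nat \<Rightarrow> 'a) \<Rightarrow> 'a" where
  "entry_sum G n x = finprod G (snd x) {..<n}"

definition Gn :: "('a,'b) monoid_scheme \<Rightarrow> 'a set \<Rightarrow> nat \<Rightarrow> ((nat \<Rightarrow> nat) \<times> (nat \<Rightarrow> 'a)) monoid" where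
  "Gn G H n = \<lparr> carrier = {x \<in> mon_carrier G n. entry_sum G n x \<in> H},
                monoid.mult = mon_mult G n, one = mon_one G n \<rparr>"

definition red :: "('a,'b) monoid_scheme \<Rightarrow> 'a set \<Rightarrow> nat \<Rightarrow> (nat \<Rightarrow> nat) \<times> (nat \<Rightarrow> 'a) \<Rightarrow> (nat \<Rightarrow> nat) \<times> (nat \<Rightarrow> 'a set)" where
  "red G H n x = (fst x, \<lambda>i. if i < n then H #>\<^bsub>G\<^esub> snd x i else undefined)"

definition mtrace :: "complex mat \<Rightarrow> complex" where
  "mtrace A = (\<Sum>i<dim_row A. A $$ (i, i))"

definition is_rep :: "('g,'b) monoid_scheme \<Rightarrow> nat \<Rightarrow> ('g \<Rightarrow> complex mat) \<Rightarrow> bool" where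
  "is_rep \<Gamma> d \<rho> \<longleftrightarrow>
     (\<forall>g\<in>carrier \<Gamma>. \<rho> g \<in> carrier_mat d d) \<and>
     (\<forall>g\<in>carrier \<Gamma>. \<forall>h\<in>carrier \<Gamma>. \<rho> (g \<otimes>\<^bsub>\<Gamma>\<^esub> h) = \<rho> g * \<rho> h) \<and>
     \<rho> \<one>\<^bsub>\<Gamma>\<^esub> = 1\<^sub>m d"

text \<open>Elements of the Grothendieck group R(Gamma) are differences [V] - [W];
we identify them with their (virtual) characters.\<close>
definition virtual_char :: "('g,'b) monoid_scheme \<Rightarrow> ('g \<Rightarrow> complex) \<Rightarrow> bool" where
  "virtual_char \<Gamma> \<chi> \<longleftrightarrow> (\<exists>d1 \<rho>1 d2 \<rho>2. is_rep \<Gamma> d1 \<rho>1 \<and> is_rep \<Gamma> d2 \<rho>2 \<and>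
      (\<forall>g\<in>carrier \<Gamma>. \<chi> g = mtrace (\<rho>1 g) - mtrace (\<rho>2 g)))"

text \<open>The bilinear form making irreducible classes orthonormal, in terms of characters.\<close>
definition char_inner :: "('g,'b) monoid_scheme \<Rightarrow> ('g \<Rightarrow> complex) \<Rightarrow> ('g \<Rightarrow> complex) \<Rightarrow> complex" where
  "char_inner \<Gamma> \<chi> \<psi> = (\<Sum>g\<in>carrier \<Gamma>. \<chi> g * cnj (\<psi> g)) / of_nat (card (carrier \<Gamma>))"

definition lin_char :: "('a,'b) monoid_scheme \<Rightarrow> 'a set \<Rightarrow> ('a \<Rightarrow> complex) \<Rightarrow> bool" where
  "lin_char G H l \<longleftrightarrow> (\<forall>x\<in>H. l x \<noteq> 0) \<and> (\<forall>x\<in>H. \<forall>y\<in>H. l (x \<otimes>\<^bsub>G\<^esub> y) = l x * l y)"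

text \<open>Phi_l = tau_l o phi^*, on characters: pull back along reduction mod H and
tensor with the linear character g maps to l (s g).\<close>
definition Phi :: "('a,'b) monoid_scheme \<Rightarrow> 'a set \<Rightarrow> nat \<Rightarrow> ('a \<Rightarrow> complex) \<Rightarrow>
     ((nat \<Rightarrow> nat) \<times> (nat \<Rightarrow> 'a set) \<Rightarrow> complex) \<Rightarrow> (nat \<Rightarrow> nat) \<times> (nat \<Rightarrow> 'a) \<Rightarrow> complex" where
  "Phi G H n l \<chi> = (\<lambda>g. l (entry_sum G n g) * \<chi> (red G H n g))"

end

theory Submission
  imports Defs
begin

text \<open>
  Fix h \<in> H with l h \<noteq> l' h and let T be left multiplication by the
  diagonal monomial matrix diag(h,1,...,1), i.e. the map scaling the first entry by h.
  T permutes G_n(G,H), multiplies the entry sum by h, and does not change the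
  reduction mod H.  Hence the integrand  Phi_l chi * cnj (Phi_l' psi)  of the
  inner product gets multiplied by the constant c = l h * cnj (l' h) under T, so the
  sum over the group equals c times itself.  Since linear characters of a finite
  group take unimodular values, c \<noteq> 1, and the sum vanishes.
\<close>

lemma lin_char_one:
  assumes "group G" "subgroup H G" "lin_char G H l"
  shows "l \<one>\<^bsub>G\<^esub> = 1"
proof -
  have one_H: "\<one>\<^bsub>G\<^esub> \<in> H" using assms(2) subgroup.one_closed by blast
  have "l \<one>\<^bsub>G\<^esub> = l \<one>\<^bsub>G\<^esub> * l \<one>\<^bsub>G\<^esub>"
    using assms(3) one_H unfolding lin_char_def
    by (metis assms(1) group.is_monoid monoid.l_one subgroup.mem_carrier[OF assms(2)])
  moreover have "l \<one>\<^bsub>G\<^esub> \<noteq> 0" using assms(3) one_H unfolding lin_char_def by blast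
  ultimately show ?thesis by (metis mult_cancel_right2 mult.commute)
qed

lemma lin_char_pow:
  assumes "group G" "subgroup H G" "lin_char G H l" "h \<in> H"
  shows "h [^]\<^bsub>G\<^esub> (k::nat) \<in> H \<and> l (h [^]\<^bsub>G\<^esub> k) = l h ^ k"
proof (induction k)
  case 0
  show ?case using lin_char_one[OF assms(1-3)] subgroup.one_closed[OF assms(2)] by simp
next
  case (Suc k)
  then have hk: "h [^]\<^bsub>G\<^esub> k \<in> H" and lk: "l (h [^]\<^bsub>G\<^esub> k) = l h ^ k" by auto
  have "l (h [^]\<^bsub>G\<^esub> k \<otimes>\<^bsub>G\<^esub> h) = l (h [^]\<^bsub>G\<^esub> k) * l h"
    using assms(3,4) hk unfolding lin_char_def by blast
  then show ?case
    using subgroup.m_closed[OF assms(2) hk assms(4)] lk by (simp add: mult.commute)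
qed

text \<open>On a finite group, linear characters take values of modulus one
  (they are roots of unity of order dividing the group order).\<close>
lemma lin_char_unimodular:
  assumes "group G" "finite (carrier G)" "subgroup H G" "lin_char G H l" "h \<in> H"
  shows "cnj (l h) * l h = 1"
proof -
  have "h [^]\<^bsub>G\<^esub> order G = \<one>\<^bsub>G\<^esub>"
    using group.pow_order_eq_1[OF assms(1) subgroup.mem_carrier[OF assms(3,5)]] .
  then have root: "l h ^ order G = 1"
    using lin_char_pow[OF assms(1,3,4,5), of "order G"] lin_char_one[OF assms(1,3,4)] by simp
  have "0 < order G"
    using monoid.order_gt_0_iff_finite[OF group.is_monoid[OF assms(1)]] assms(2) by (rule iffD2)
  moreover have "norm (l h) = 1 \<or> order G = 0" using root by (rule power_eq_1_iff)
  ultimately have "norm (l h) = 1" by linarith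
  then show ?thesis using complex_norm_square[of "l h"] by (simp add: mult.commute)
qed

text \<open>Two linear characters differing at h: the ratio l h / l' h = l h * cnj (l' h)
  is not 1.  This is the scalar by which the translation below rescales the integrand.\<close>
lemma lin_char_ratio_ne_one:
  assumes "group G" "finite (carrier G)" "subgroup H G" "lin_char G H l'" "h \<in> H"
    and "l h \<noteq> l' h"
  shows "l h * cnj (l' h) \<noteq> 1"
proof
  assume "l h * cnj (l' h) = 1"
  then have "l h * (cnj (l' h) * l' h) = l' h" by (metis mult.assoc mult_1)
  then show False using lin_char_unimodular[OF assms(1-5)] assms(6) by simp
qed

lemma sum_zero_by_rescaling_bij:
  fixes F :: "'x \<Rightarrow> 'c::idom"
  assumes bij: "bij_betw T C C" and rescale: "\<And>g. g \<in> C \<Longrightarrow> F (T g) = c * F g"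
    and "c \<noteq> 1"
  shows "sum F C = 0"
proof -
  have "sum F C = sum (F \<circ> T) C" using sum.reindex_bij_betw[OF bij, of F] by simp
  also have "\<dots> = c * sum F C" by (simp add: sum_distrib_left rescale)
  finally have "(1 - c) * sum F C = 0" by (simp add: algebra_simps)
  then show ?thesis using \<open>c \<noteq> 1\<close> by simp
qed

text \<open>Left multiplication by diag(a,1,...,1): the first entry is multiplied by a.\<close>
definition scale_first ::
    "('a,'b) monoid_scheme \<Rightarrow> 'a \<Rightarrow> (nat \<Rightarrow> nat) \<times> (nat \<Rightarrow> 'a) \<Rightarrow> (nat \<Rightarrow> nat) \<times> (nat \<Rightarrow> 'a)"
  where "scale_first G a g = (fst g, (snd g)(0 := a \<otimes>\<^bsub>G\<^esub> snd g 0))"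

lemma finprod_scale_first:
  fixes n :: nat
  assumes "comm_monoid G" "n \<ge> 1" "\<forall>i<n. v i \<in> carrier G" "a \<in> carrier G"
  shows "finprod G (v(0 := a \<otimes>\<^bsub>G\<^esub> v 0)) {..<n} = a \<otimes>\<^bsub>G\<^esub> finprod G v {..<n}"
proof -
  interpret comm_monoid G by fact
  have range_split: "{..<n} = insert 0 {1..<n}" using assms(2) by auto
  have v0: "v 0 \<in> carrier G" using assms by auto
  have rest: "finprod G v {1..<n} \<in> carrier G" using assms by (intro finprod_closed) auto
  have "finprod G (v(0 := a \<otimes>\<^bsub>G\<^esub> v 0)) {1..<n} = finprod G v {1..<n}"
    by (rule finprod_cong') (use assms in \<open>auto simp: Pi_def\<close>)
  then have "finprod G (v(0 := a \<otimes>\<^bsub>G\<^esub> v 0)) {..<n} = (a \<otimes>\<^bsub>G\<^esub> v 0) \<otimes>\<^bsub>G\<^esub> finprod G v {1..<n}"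
    unfolding range_split by (subst finprod_insert) (use assms v0 in auto)
  also have "\<dots> = a \<otimes>\<^bsub>G\<^esub> finprod G v {..<n}"
    unfolding range_split by (subst finprod_insert) (use assms v0 rest in \<open>auto simp: m_assoc\<close>)
  finally show ?thesis .
qed

lemma entry_sum_scale_first:
  assumes "comm_monoid G" "n \<ge> 1" "g \<in> mon_carrier G n" "a \<in> carrier G"
  shows "entry_sum G n (scale_first G a g) = a \<otimes>\<^bsub>G\<^esub> entry_sum G n g"
  using finprod_scale_first[OF assms(1,2) _ assms(4), of "snd g"] assms(3)
  unfolding entry_sum_def scale_first_def mon_carrier_def by auto

text \<open>Scaling by an element of H keeps every entry in its H-coset, so the
  reduction mod H is unchanged (diag(a,1,...,1) lies in the kernel of phi).\<close>
lemma red_scale_first: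
  assumes "group G" "subgroup H G" "a \<in> H" "g \<in> mon_carrier G n" "n \<ge> 1"
  shows "red G H n (scale_first G a g) = red G H n g"
proof -
  have a: "a \<in> carrier G" using subgroup.mem_carrier[OF assms(2,3)] .
  have v0: "snd g 0 \<in> carrier G" using assms(4,5) unfolding mon_carrier_def by auto
  have "H #>\<^bsub>G\<^esub> (a \<otimes>\<^bsub>G\<^esub> snd g 0) = H #>\<^bsub>G\<^esub> snd g 0"
    using group.coset_mult_assoc[OF assms(1), of H a "snd g 0"]
      group.coset_join2[OF assms(1) a assms(2,3)] subgroup.subset[OF assms(2)] a v0
    by metis
  then have "\<And>i. H #>\<^bsub>G\<^esub> (((snd g)(0 := a \<otimes>\<^bsub>G\<^esub> snd g 0)) i) = H #>\<^bsub>G\<^esub> snd g i"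
    by simp
  then show ?thesis unfolding red_def scale_first_def fst_conv snd_conv by presburger
qed

lemma scale_first_in_Gn:
  assumes "comm_group G" "subgroup H G" "n \<ge> 1" "a \<in> H" "g \<in> carrier (Gn G H n)"
  shows "scale_first G a g \<in> carrier (Gn G H n)"
proof -
  interpret comm_group G by fact
  have a: "a \<in> carrier G" using subgroup.mem_carrier[OF assms(2,4)] .
  have g: "g \<in> mon_carrier G n" and es: "entry_sum G n g \<in> H"
    using assms(5) unfolding Gn_def by auto
  have "entry_sum G n (scale_first G a g) \<in> H"
    using entry_sum_scale_first[OF comm_monoid_axioms assms(3) g a]
      subgroup.m_closed[OF assms(2,4) es] by simp
  moreover have "scale_first G a g \<in> mon_carrier G n"
    using g a assms(3) unfolding mon_carrier_def scale_first_def by auto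
  ultimately show ?thesis unfolding Gn_def by simp
qed

lemma scale_first_inv:
  assumes "group G" "a \<in> carrier G" "g \<in> mon_carrier G n" "n \<ge> 1"
  shows "scale_first G (inv\<^bsub>G\<^esub> a) (scale_first G a g) = g"
    and "scale_first G a (scale_first G (inv\<^bsub>G\<^esub> a) g) = g"
proof -
  interpret group G by fact
  have "snd g 0 \<in> carrier G" using assms(3,4) unfolding mon_carrier_def by auto
  then show "scale_first G (inv\<^bsub>G\<^esub> a) (scale_first G a g) = g"
    and "scale_first G a (scale_first G (inv\<^bsub>G\<^esub> a) g) = g"
    using assms(2) by (auto simp: scale_first_def m_assoc[symmetric])
qed

lemma scale_first_bij:
  assumes "comm_group G" "subgroup H G" "n \<ge> 1" "a \<in> H"
  shows "bij_betw (scale_first G a) (carrier (Gn G H n)) (carrier (Gn G H n))"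
proof (rule bij_betw_byWitness[where f' = "scale_first G (inv\<^bsub>G\<^esub> a)"])
  have grp: "group G" using assms(1) comm_group.axioms(2) by blast
  have a: "a \<in> carrier G" using subgroup.mem_carrier[OF assms(2,4)] .
  have a': "inv\<^bsub>G\<^esub> a \<in> H" using subgroup.m_inv_closed[OF assms(2,4)] .
  have mc: "carrier (Gn G H n) \<subseteq> mon_carrier G n" unfolding Gn_def by auto
  show "\<forall>g\<in>carrier (Gn G H n). scale_first G (inv\<^bsub>G\<^esub> a) (scale_first G a g) = g"
    and "\<forall>g\<in>carrier (Gn G H n). scale_first G a (scale_first G (inv\<^bsub>G\<^esub> a) g) = g"
    using scale_first_inv[OF grp a _ assms(3)] mc by auto
  show "scale_first G a ` carrier (Gn G H n) \<subseteq> carrier (Gn G H n)"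
    and "scale_first G (inv\<^bsub>G\<^esub> a) ` carrier (Gn G H n) \<subseteq> carrier (Gn G H n)"
    using scale_first_in_Gn[OF assms(1-3)] assms(4) a' by auto
qed

lemma Phi_scale_first:
  assumes "comm_group G" "subgroup H G" "n \<ge> 1" "lin_char G H l" "h \<in> H"
    and "g \<in> carrier (Gn G H n)"
  shows "Phi G H n l \<chi> (scale_first G h g) = l h * Phi G H n l \<chi> g"
proof -
  interpret comm_group G by fact
  have g: "g \<in> mon_carrier G n" and es: "entry_sum G n g \<in> H"
    using assms(6) unfolding Gn_def by auto
  have "l (entry_sum G n (scale_first G h g)) = l h * l (entry_sum G n g)"
    using entry_sum_scale_first[OF comm_monoid_axioms assms(3) g subgroup.mem_carrier[OF assms(2,5)]]
      assms(4,5) es unfolding lin_char_def by simp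
  then show ?thesis
    unfolding Phi_def red_scale_first[OF group_axioms assms(2,5) g assms(3)] by simp
qed

theorem proposition3:
  fixes G :: "('a, 'b) monoid_scheme" and H :: "'a set" and n :: nat
    and l l' :: "'a \<Rightarrow> complex"
    and \<chi> \<psi> :: "(nat \<Rightarrow> nat) \<times> (nat \<Rightarrow> 'a set) \<Rightarrow> complex"
  assumes "comm_group G" and "finite (carrier G)" and "subgroup H G"
    and "lin_char G H l" and "lin_char G H l'" and "\<exists>h\<in>H. l h \<noteq> l' h"
    and "n \<ge> 1"
    and "virtual_char (Gn (G Mod H) {\<one>\<^bsub>G Mod H\<^esub>} n) \<chi>"
    and "virtual_char (Gn (G Mod H) {\<one>\<^bsub>G Mod H\<^esub>} n) \<psi>"
  shows "char_inner (Gn G H n) (Phi G H n l \<chi>) (Phi G H n l' \<psi>) = 0"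
proof -
  have grp: "group G" using assms(1) comm_group.axioms(2) by blast
  obtain h where h: "h \<in> H" and differ: "l h \<noteq> l' h" using assms(6) by blast
  define F where "F = (\<lambda>g. Phi G H n l \<chi> g * cnj (Phi G H n l' \<psi> g))"
  have "F (scale_first G h g) = (l h * cnj (l' h)) * F g" if "g \<in> carrier (Gn G H n)" for g
    unfolding F_def using Phi_scale_first[OF assms(1,3,7,4) h that, of \<chi>]
      Phi_scale_first[OF assms(1,3,7,5) h that, of \<psi>] by simp
  then have "sum F (carrier (Gn G H n)) = 0"
    using sum_zero_by_rescaling_bij[OF scale_first_bij[OF assms(1,3,7) h]]
      lin_char_ratio_ne_one[where l = l and l' = l', OF grp assms(2,3,5) h differ] by blast
  then show ?thesis unfolding char_inner_def F_def by simp
qed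

end
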